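(* Let $\pi=\sigma_0,\sigma_1,\dots,\sigma_t=\tau$ be permutations in $S_n$ such that for each $0\le m<t$, $\sigma_{m+1}$ is obtained from $\sigma_m$ by exchanging two entries in adjacent positions $p,p+1$. Say that such a step puts the pair in decreasing order if the entry in position $p$ is smaller than the entry in position $p+1$ in $\sigma_m$ (so it is larger in $\sigma_{m+1}$), and in increasing order otherwise. Suppose $s$ of the steps put the pair in decreasing order and $r$ in increasing order, so $r+s=t$. Let $\lambda=\lambda(\pi)$, $\mu=\lambda(\tau)$ (parts padded with zeros). Then for every $1\le j\le n$, \[\sum_{i=1}^j\mu_i-r\le\sum_{i=1}^j\lambda_i\le\sum_{i=1}^j\mu_i+s.\]
   Context: Permutations are written in one-line notation. For $\pi\in S_n$, $\lambda(\pi)$ denotes the shape of the tableaux associated with $\pi$ by the RSK correspondence. *)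

theory Defs
  imports Main
begin

definition is_perm :: "nat \<Rightarrow> nat list \<Rightarrow> bool" where
  "is_perm n xs \<longleftrightarrow> length xs = n \<and> distinct xs \<and> set xs = {1..n}"

text \<open>Schensted row insertion of x into a tableau (list of rows, top row first):
  x bumps the leftmost entry of the row that is larger than x, which is then
  inserted into the next row; if no entry is larger, x is appended to the row.\<close>
fun row_insert :: "nat list list \<Rightarrow> nat \<Rightarrow> nat list list" where
  "row_insert [] x = [[x]]"
| "row_insert (r # rs) x =
     (let a = takeWhile (\<lambda>y. y \<le> x) r; b = dropWhile (\<lambda>y. y \<le> x) r in
      if b = [] then (r @ [x]) # rs
      else (a @ x # tl b) # row_insert rs (hd b))"

definition rsk_P :: "nat list \<Rightarrow> nat list list" where
  "rsk_P w = foldl row_insert [] w"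

definition rsk_shape :: "nat list \<Rightarrow> nat list" where
  "rsk_shape w = map length (rsk_P w)"

text \<open>i-th part (0-indexed) of a partition, padded with zeros.\<close>
definition part :: "nat list \<Rightarrow> nat \<Rightarrow> nat" where
  "part lam i = (if i < length lam then lam ! i else 0)"

definition adj_swap :: "nat list \<Rightarrow> nat \<Rightarrow> nat list" where
  "adj_swap xs p = xs[p := xs ! Suc p, Suc p := xs ! p]"

end

theory Submission
  imports Defs
begin

text \<open>For a word \<open>w\<close> with distinct entries, let \<open>G\<^sub>k(w)\<close> be the largest number of entries covered by
  \<open>k\<close> increasing subsequences. By Greene's theorem \<open>G\<^sub>k(w) = \<lambda>\<^sub>1 + \<dots> + \<lambda>\<^sub>k\<close> for \<open>\<lambda> = \<lambda>(w)\<close>: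
  \<open>G\<^sub>k\<close> is invariant under Knuth moves, because a cover can be rearranged so that it never uses both
  letters of the transposed pair; row insertion acts on reading words by Knuth moves, so \<open>w\<close> is Knuth
  equivalent to the reading word of its insertion tableau; and for the reading word of a tableau the
  first \<open>k\<close> rows are an optimal cover, since an increasing subsequence meets each column at most once.

  An adjacent transposition turning an ascent \<open>a b\<close> into the descent \<open>b a\<close> only changes the relative
  order of \<open>a\<close> and \<open>b\<close>. So every cover of the new word is a cover of the old one, and every cover of
  the old word becomes one of the new word after deleting \<open>a\<close>: the step lowers \<open>G\<^sub>k\<close> by at most one
  and never raises it, and the reverse step raises it by at most one and never lowers it. Summing over
  the steps gives the bounds.\<close>

section \<open>Increasing subsequences and Greene's invariant\<close>

fun position :: "nat list \<Rightarrow> nat \<Rightarrow> nat" where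
  "position [] x = 0"
| "position (y # ys) x = (if y = x then 0 else Suc (position ys x))"

lemma position_append:
  "position (u @ v) x = (if x \<in> set u then position u x else length u + position v x)"
  by (induction u) auto

lemma position_less_length: "x \<in> set w \<Longrightarrow> position w x < length w"
  by (induction w) auto

lemma nth_position [simp]: "x \<in> set w \<Longrightarrow> w ! position w x = x"
  by (induction w) auto

lemma position_eq_iff: "x \<in> set w \<Longrightarrow> y \<in> set w \<Longrightarrow> position w x = position w y \<longleftrightarrow> x = y"
  by (metis nth_position)

definition increasing_in :: "nat list \<Rightarrow> nat set \<Rightarrow> bool" where
  "increasing_in w C \<longleftrightarrow> C \<subseteq> set w \<and> (\<forall>x\<in>C. \<forall>y\<in>C. x < y \<longrightarrow> position w x < position w y)"

definition greene_num :: "nat \<Rightarrow> nat list \<Rightarrow> nat" where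
  "greene_num k w = Max ((\<lambda>C. card (\<Union>i<k. C i)) ` {C. \<forall>i<k. increasing_in w (C i)})"

lemma increasing_in_subset: "increasing_in w C \<Longrightarrow> D \<subseteq> C \<Longrightarrow> increasing_in w D"
  unfolding increasing_in_def by blast

lemma increasing_in_set: "increasing_in w C \<Longrightarrow> x \<in> C \<Longrightarrow> x \<in> set w"
  unfolding increasing_in_def by blast

lemma increasing_in_finite: "increasing_in w C \<Longrightarrow> finite C"
  unfolding increasing_in_def using finite_subset by blast

lemma increasing_inD: "increasing_in w C \<Longrightarrow> x \<in> C \<Longrightarrow> y \<in> C \<Longrightarrow> x < y \<Longrightarrow> position w x < position w y"
  unfolding increasing_in_def by blast

lemma increasing_in_le: "increasing_in w C \<Longrightarrow> x \<in> C \<Longrightarrow> y \<in> C \<Longrightarrow> x \<le> y \<Longrightarrow> position w x \<le> position w y"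
  using increasing_inD[of w C x y] by (cases "x = y") auto

lemma increasing_in_Un:
  assumes "increasing_in w A" "increasing_in w B"
    and "\<And>x y. x \<in> A \<Longrightarrow> y \<in> B \<Longrightarrow> x < y \<and> position w x < position w y"
  shows "increasing_in w (A \<union> B)"
  using assms unfolding increasing_in_def by (metis Un_iff le_sup_iff not_less_iff_gr_or_eq)

lemma increasing_in_insert:
  assumes "increasing_in w C" "m \<in> set w"
    and "\<And>x. x \<in> C \<Longrightarrow> (x < m \<and> position w x < position w m) \<or> (m < x \<and> position w m < position w x)"
  shows "increasing_in w (insert m C)"
  unfolding increasing_in_def
proof (intro conjI ballI impI)
  show "insert m C \<subseteq> set w" using assms unfolding increasing_in_def by blast
next
  fix x y assume "x \<in> insert m C" "y \<in> insert m C" "x < y"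
  then show "position w x < position w y"
    using assms(3)[of x] assms(3)[of y] increasing_inD[OF assms(1), of x y] by auto
qed

lemma finite_UN_increasing_in: "\<forall>i<(k::nat). increasing_in w (C i) \<Longrightarrow> finite (\<Union>i<k. C i)"
  using increasing_in_finite by auto

lemma finite_greene_candidates: "finite ((\<lambda>C. card (\<Union>i<k. C i)) ` {C. \<forall>i<k. increasing_in w (C i)})"
proof (rule finite_subset)
  show "(\<lambda>C. card (\<Union>i<k. C i)) ` {C. \<forall>i<k. increasing_in w (C i)} \<subseteq> {..card (set w)}"
    by (auto intro!: card_mono simp: increasing_in_def)
qed simp

lemma card_le_greene_num: "(\<And>i. i < k \<Longrightarrow> increasing_in w (C i)) \<Longrightarrow> card (\<Union>i<k. C i) \<le> greene_num k w"
  unfolding greene_num_def using finite_greene_candidates by (intro Max_ge) auto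

lemma greene_num_attained:
  obtains C where "\<forall>i<k. increasing_in w (C i)" "card (\<Union>i<k. C i) = greene_num k w"
proof -
  have "(\<lambda>_. {}) \<in> {C. \<forall>i<k. increasing_in w (C i)}" by (auto simp: increasing_in_def)
  then have "greene_num k w \<in> (\<lambda>C. card (\<Union>i<k. C i)) ` {C. \<forall>i<k. increasing_in w (C i)}"
    unfolding greene_num_def using finite_greene_candidates by (intro Max_in) auto
  then show ?thesis using that by auto
qed

lemma greene_num_le_by_transfer:
  assumes "\<And>C. \<forall>i<k. increasing_in w (C i) \<Longrightarrow>
             \<exists>D. (\<forall>i<k. increasing_in v (D i)) \<and> card (\<Union>i<k. C i) \<le> card (\<Union>i<k. D i) + e"
  shows "greene_num k w \<le> greene_num k v + e"
proof -
  obtain C where C: "\<forall>i<k. increasing_in w (C i)" "card (\<Union>i<k. C i) = greene_num k w"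
    using greene_num_attained .
  then obtain D where D: "\<forall>i<k. increasing_in v (D i)" "card (\<Union>i<k. C i) \<le> card (\<Union>i<k. D i) + e"
    using assms by blast
  have "card (\<Union>i<k. D i) \<le> greene_num k v"
    using D(1) by (intro card_le_greene_num) auto
  then show ?thesis using C(2) D(2) by linarith
qed

section \<open>Adjacent transpositions\<close>

lemma position_swap:
  assumes "distinct (u @ a # b # v)"
  shows "position (u @ b # a # v) x =
           (if x = a then position (u @ a # b # v) b
            else if x = b then position (u @ a # b # v) a else position (u @ a # b # v) x)"
    and "position (u @ a # b # v) b = Suc (position (u @ a # b # v) a)"
  using assms by (auto simp: position_append)

text \<open>An adjacent transposition only reverses the relative order of the two exchanged entries.\<close>
lemma increasing_in_swap:
  assumes d: "distinct (u @ a # b # v)" and C: "increasing_in (u @ a # b # v) C"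
    and sep: "\<not> (a \<in> C \<and> b \<in> C)"
  shows "increasing_in (u @ b # a # v) C"
proof -
  let ?w = "u @ a # b # v"
  have "position (u @ b # a # v) x < position (u @ b # a # v) y" if xy: "x \<in> C" "y \<in> C" "x < y" for x y
  proof -
    have lt: "position ?w x < position ?w y" using increasing_inD[OF C xy] .
    have ne: "s \<noteq> t \<Longrightarrow> position ?w s \<noteq> position ?w t" if "s \<in> set ?w" "t \<in> set ?w" for s t
      using position_eq_iff[OF that] by blast
    have "x \<in> set ?w" "y \<in> set ?w" "a \<in> set ?w" "b \<in> set ?w"
      using increasing_in_set[OF C] xy by auto
    note ne[OF this(1,3)] ne[OF this(1,4)] ne[OF this(2,3)] ne[OF this(2,4)]
    moreover have "\<not> (x = a \<and> y = b)" "\<not> (x = b \<and> y = a)" using sep xy by auto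
    ultimately show ?thesis
      using lt position_swap(1)[OF d, of x] position_swap(1)[OF d, of y] position_swap(2)[OF d] xy(3)
      by (cases "x = a"; cases "x = b"; cases "y = a"; cases "y = b"; simp; linarith)
  qed
  then show ?thesis using C unfolding increasing_in_def by auto
qed

lemma increasing_in_unswap:
  assumes d: "distinct (u @ a # b # v)" and ab: "a < b" and C: "increasing_in (u @ b # a # v) C"
  shows "increasing_in (u @ a # b # v) C"
proof (rule increasing_in_swap)
  show d': "distinct (u @ b # a # v)" using d by auto
  show "\<not> (b \<in> C \<and> a \<in> C)"
  proof
    assume "b \<in> C \<and> a \<in> C"
    then have "position (u @ b # a # v) a < position (u @ b # a # v) b"
      using increasing_inD[OF C _ _ ab] by blast
    then show False using position_swap(2)[OF d'] by simp
  qed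
qed fact

lemma greene_num_swap_ascent_le:
  assumes "distinct (u @ a # b # v)" "a < b"
  shows "greene_num k (u @ b # a # v) \<le> greene_num k (u @ a # b # v)"
proof -
  have "greene_num k (u @ b # a # v) \<le> greene_num k (u @ a # b # v) + 0"
    using increasing_in_unswap[OF assms] by (intro greene_num_le_by_transfer) auto
  then show ?thesis by simp
qed

lemma card_le_Suc_card_Diff1: "card A \<le> Suc (card (A - {x}))"
  by (cases "finite A \<and> x \<in> A") (auto simp: card_Suc_Diff1)

lemma greene_num_le_swap_Suc:
  assumes d: "distinct (u @ a # b # v)"
  shows "greene_num k (u @ a # b # v) \<le> greene_num k (u @ b # a # v) + 1"
proof (rule greene_num_le_by_transfer)
  fix C assume C: "\<forall>i<k. increasing_in (u @ a # b # v) (C i)"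
  show "\<exists>D. (\<forall>i<k. increasing_in (u @ b # a # v) (D i)) \<and> card (\<Union>i<k. C i) \<le> card (\<Union>i<k. D i) + 1"
  proof (intro exI conjI)
    show "\<forall>i<k. increasing_in (u @ b # a # v) (C i - {a})"
    proof (intro allI impI increasing_in_swap[OF d])
      fix i assume "i < k"
      then show "increasing_in (u @ a # b # v) (C i - {a})"
        using C increasing_in_subset[of _ "C i"] by blast
    qed simp
    show "card (\<Union>i<k. C i) \<le> card (\<Union>i<k. C i - {a}) + 1"
      using card_le_Suc_card_Diff1[of "\<Union>i<k. C i" a] by (simp only: UN_extend_simps(6) Suc_eq_plus1)
  qed
qed

section \<open>Invariance under Knuth moves\<close>

lemma disjoint_cover:
  fixes k :: nat
  assumes "\<forall>i<k. increasing_in w (C i)"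
  obtains E where "\<forall>i<k. increasing_in w (E i)" "(\<Union>i<k. E i) = (\<Union>i<k. C i)"
    "\<forall>i<k. \<forall>j<k. i \<noteq> j \<longrightarrow> E i \<inter> E j = {}"
proof
  define E where "E i = C i - (\<Union>l<i. C l)" for i
  show "\<forall>i<k. increasing_in w (E i)"
    using assms increasing_in_subset unfolding E_def by blast
  have "(\<Union>i<n. E i) = (\<Union>i<n. C i)" for n :: nat
    by (induction n) (auto simp: E_def lessThan_Suc)
  then show "(\<Union>i<k. E i) = (\<Union>i<k. C i)" .
  show "\<forall>i<k. \<forall>j<k. i \<noteq> j \<longrightarrow> E i \<inter> E j = {}"
  proof (intro allI impI)
    fix i j :: nat assume "i \<noteq> j"
    then consider "i < j" | "j < i" by linarith
    then show "E i \<inter> E j = {}" unfolding E_def by cases blast+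
  qed
qed

lemma UN_fun_upd2:
  assumes "i \<in> I" "l \<in> I" "i \<noteq> l" "S \<union> T = C i \<union> C l"
  shows "(\<Union>j\<in>I. (C(i := S, l := T)) j) = (\<Union>j\<in>I. C j)"
  using assms by (auto simp: set_eq_iff)

lemma card_UN_le_fun_upd_insert:
  fixes k :: nat
  assumes "finite (\<Union>j<k. E j)" "m \<notin> (\<Union>j<k. E j)" "i < k"
  shows "card (\<Union>j<k. E j) \<le> card (\<Union>j<k. (E(i := insert m (E i - {c}))) j)"
proof -
  let ?U = "\<Union>j<k. E j"
  have sub: "insert m (?U - {c}) \<subseteq> (\<Union>j<k. (E(i := insert m (E i - {c}))) j)"
    using assms(3) by (auto split: if_splits)
  have "card ?U \<le> Suc (card (?U - {c}))"
    by (rule card_le_Suc_card_Diff1)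
  also have "\<dots> = card (insert m (?U - {c}))"
    using assms(1,2) by simp
  also have "\<dots> \<le> card (\<Union>j<k. (E(i := insert m (E i - {c}))) j)"
  proof (rule card_mono[OF _ sub])
    have "(\<Union>j<k. (E(i := insert m (E i - {c}))) j) \<subseteq> insert m ?U"
      using assms(3) by auto
    then show "finite (\<Union>j<k. (E(i := insert m (E i - {c}))) j)"
      using assms(1) finite_subset by blast
  qed
  finally show ?thesis .
qed

lemma increasing_in_adjacent_gap:
  assumes "increasing_in w X" "a \<in> X" "b \<in> X" "position w b = Suc (position w a)" "x \<in> X"
  shows "x \<le> a \<or> b \<le> x"
  using increasing_inD[OF assms(1,2,5)] increasing_inD[OF assms(1,5,3)] assms(4) by fastforce

text \<open>The surgery behind the invariance under Knuth moves, with \<open>b\<close> right after \<open>a\<close> and \<open>a < m < b\<close>: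
  the subsequence through \<open>a\<close> and \<open>b\<close> either gives one of them up for an uncovered \<open>m\<close>, or
  exchanges tails with the subsequence through \<open>m\<close>.\<close>
lemma separating_cover:
  fixes k :: nat
  assumes C: "\<forall>i<k. increasing_in w (C i)"
    and adj: "position w b = Suc (position w a)" and between: "a < m" "m < b"
    and replace: "\<And>X. increasing_in w X \<Longrightarrow> a \<in> X \<Longrightarrow> b \<in> X \<Longrightarrow> m \<notin> X \<Longrightarrow>
                       \<exists>c\<in>{a, b}. increasing_in w (insert m (X - {c}))"
    and exchange: "\<And>X Y. increasing_in w X \<Longrightarrow> increasing_in w Y \<Longrightarrow> a \<in> X \<Longrightarrow> b \<in> X \<Longrightarrow>
                       m \<in> Y \<Longrightarrow> a \<notin> Y \<Longrightarrow> b \<notin> Y \<Longrightarrow>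
                       \<exists>S T. increasing_in w S \<and> increasing_in w T \<and> S \<union> T = X \<union> Y
                             \<and> \<not> (a \<in> S \<and> b \<in> S) \<and> \<not> (a \<in> T \<and> b \<in> T)"
  shows "\<exists>D. (\<forall>i<k. increasing_in w (D i) \<and> \<not> (a \<in> D i \<and> b \<in> D i))
             \<and> card (\<Union>i<k. C i) \<le> card (\<Union>i<k. D i)"
proof -
  obtain E where E: "\<forall>i<k. increasing_in w (E i)" "(\<Union>i<k. E i) = (\<Union>i<k. C i)"
    and disj: "\<forall>i<k. \<forall>j<k. i \<noteq> j \<longrightarrow> E i \<inter> E j = {}"
    using disjoint_cover[OF C] .
  show ?thesis
  proof (cases "\<exists>i<k. a \<in> E i \<and> b \<in> E i")
    case False
    then show ?thesis using E by auto
  next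
    case True
    then obtain i where i: "i < k" "a \<in> E i" "b \<in> E i" by blast
    have others: "a \<notin> E j \<and> b \<notin> E j" if "j < k" "j \<noteq> i" for j
      using disj i that by blast
    have "m \<notin> E i"
      using increasing_in_adjacent_gap[OF _ i(2,3) adj] E(1) i(1) between by fastforce
    show ?thesis
    proof (cases "\<exists>l<k. m \<in> E l")
      case False
      obtain c where c: "c \<in> {a, b}" "increasing_in w (insert m (E i - {c}))"
        using replace E(1) i \<open>m \<notin> E i\<close> by blast
      define D where "D = E(i := insert m (E i - {c}))"
      have "\<forall>j<k. increasing_in w (D j) \<and> \<not> (a \<in> D j \<and> b \<in> D j)"
        using E(1) others c i \<open>m \<notin> E i\<close> unfolding D_def by auto
      moreover have "card (\<Union>j<k. E j) \<le> card (\<Union>j<k. D j)"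
        unfolding D_def using False i(1) finite_UN_increasing_in[OF E(1)]
        by (intro card_UN_le_fun_upd_insert) auto
      ultimately show ?thesis using E(2) by auto
    next
      case True
      then obtain l where l: "l < k" "m \<in> E l" by blast
      have "l \<noteq> i" using l \<open>m \<notin> E i\<close> by blast
      then obtain S T where ST: "increasing_in w S" "increasing_in w T" "S \<union> T = E i \<union> E l"
          "\<not> (a \<in> S \<and> b \<in> S)" "\<not> (a \<in> T \<and> b \<in> T)"
        using exchange[of "E i" "E l"] E(1) i l others by blast
      define D where "D = E(i := S, l := T)"
      have "\<forall>j<k. increasing_in w (D j) \<and> \<not> (a \<in> D j \<and> b \<in> D j)"
        using E(1) others ST \<open>l \<noteq> i\<close> unfolding D_def by auto
      moreover have "(\<Union>j<k. D j) = (\<Union>j<k. E j)"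
        unfolding D_def using i(1) l(1) \<open>l \<noteq> i\<close> ST(3) by (intro UN_fun_upd2) auto
      ultimately show ?thesis using E(2) by auto
    qed
  qed
qed

lemma increasing_in_replace_left:
  assumes X: "increasing_in w X" "a \<in> X" "b \<in> X" "m \<notin> X" and m: "m \<in> set w" "a < m" "m < b"
    and adj: "position w b = Suc (position w a)" "position w a = Suc (position w m)"
  shows "increasing_in w (insert m (X - {a}))"
proof (rule increasing_in_insert[OF increasing_in_subset[OF X(1)] m(1)])
  fix x assume x: "x \<in> X - {a}"
  then have xw: "x \<in> set w" "x \<noteq> m" using X increasing_in_set by blast+
  consider "x < a" | "b \<le> x" using increasing_in_adjacent_gap[OF X(1-3) adj(1)] x by fastforce
  then show "x < m \<and> position w x < position w m \<or> m < x \<and> position w m < position w x"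
  proof cases
    case 1
    then have "position w x < position w a" using increasing_inD[OF X(1)] x X(2) by blast
    then show ?thesis using 1 m adj xw position_eq_iff[OF xw(1) m(1)] by auto
  next
    case 2
    then have "position w b \<le> position w x" using increasing_in_le[OF X(1)] x X(3) by blast
    then show ?thesis using 2 m adj by auto
  qed
qed (use X(1) in auto)

lemma increasing_in_replace_right:
  assumes X: "increasing_in w X" "a \<in> X" "b \<in> X" "m \<notin> X" and m: "m \<in> set w" "a < m" "m < b"
    and adj: "position w b = Suc (position w a)" "position w m = Suc (position w b)"
  shows "increasing_in w (insert m (X - {b}))"
proof (rule increasing_in_insert[OF increasing_in_subset[OF X(1)] m(1)])
  fix x assume x: "x \<in> X - {b}"
  then have xw: "x \<in> set w" "x \<noteq> m" using X increasing_in_set by blast+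
  consider "x \<le> a" | "b < x" using increasing_in_adjacent_gap[OF X(1-3) adj(1)] x by fastforce
  then show "x < m \<and> position w x < position w m \<or> m < x \<and> position w m < position w x"
  proof cases
    case 1
    then have "position w x \<le> position w a" using increasing_in_le[OF X(1)] x X(2) by blast
    then show ?thesis using 1 m adj by auto
  next
    case 2
    then have "position w b < position w x" using increasing_inD[OF X(1)] x X(3) by blast
    then show ?thesis using 2 m adj xw position_eq_iff[OF xw(1) m(1)] by auto
  qed
qed (use X(1) in auto)

lemma increasing_in_exchange_left:
  assumes X: "increasing_in w X" "a \<in> X" "b \<in> X" and Y: "increasing_in w Y" "m \<in> Y" "a \<notin> Y"
    and between: "a < m" "m < b"
    and adj: "position w b = Suc (position w a)" "position w a = Suc (position w m)"
  shows "increasing_in w ({x \<in> X. x \<le> a} \<union> {y \<in> Y. m < y})"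
    and "increasing_in w ({y \<in> Y. y \<le> m} \<union> {x \<in> X. b \<le> x})"
proof -
  show "increasing_in w ({x \<in> X. x \<le> a} \<union> {y \<in> Y. m < y})"
  proof (rule increasing_in_Un)
    fix x y assume x: "x \<in> {x \<in> X. x \<le> a}" and y: "y \<in> {y \<in> Y. m < y}"
    have "position w x \<le> position w a" using increasing_in_le[OF X(1)] x X(2) by blast
    moreover have "position w m < position w y" using increasing_inD[OF Y(1) Y(2)] y by blast
    moreover have "position w y \<noteq> position w a"
      using position_eq_iff increasing_in_set X(1,2) Y(1,3) y by blast
    ultimately show "x < y \<and> position w x < position w y" using x y between adj by auto
  qed (auto intro: increasing_in_subset[OF X(1)] increasing_in_subset[OF Y(1)])
  show "increasing_in w ({y \<in> Y. y \<le> m} \<union> {x \<in> X. b \<le> x})"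
  proof (rule increasing_in_Un)
    fix y x assume y: "y \<in> {y \<in> Y. y \<le> m}" and x: "x \<in> {x \<in> X. b \<le> x}"
    have "position w y \<le> position w m" using increasing_in_le[OF Y(1)] y Y(2) by blast
    moreover have "position w b \<le> position w x" using increasing_in_le[OF X(1) X(3)] x by blast
    ultimately show "y < x \<and> position w y < position w x" using x y between adj by auto
  qed (auto intro: increasing_in_subset[OF X(1)] increasing_in_subset[OF Y(1)])
qed

lemma increasing_in_exchange_right:
  assumes X: "increasing_in w X" "a \<in> X" "b \<in> X" and Y: "increasing_in w Y" "m \<in> Y" "b \<notin> Y"
    and between: "a < m" "m < b"
    and adj: "position w b = Suc (position w a)" "position w m = Suc (position w b)"
  shows "increasing_in w ({x \<in> X. x \<le> a} \<union> {y \<in> Y. m \<le> y})"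
    and "increasing_in w ({y \<in> Y. y < m} \<union> {x \<in> X. b \<le> x})"
proof -
  show "increasing_in w ({x \<in> X. x \<le> a} \<union> {y \<in> Y. m \<le> y})"
  proof (rule increasing_in_Un)
    fix x y assume x: "x \<in> {x \<in> X. x \<le> a}" and y: "y \<in> {y \<in> Y. m \<le> y}"
    have "position w x \<le> position w a" using increasing_in_le[OF X(1)] x X(2) by blast
    moreover have "position w m \<le> position w y" using increasing_in_le[OF Y(1) Y(2)] y by blast
    ultimately show "x < y \<and> position w x < position w y" using x y between adj by auto
  qed (auto intro: increasing_in_subset[OF X(1)] increasing_in_subset[OF Y(1)])
  show "increasing_in w ({y \<in> Y. y < m} \<union> {x \<in> X. b \<le> x})"
  proof (rule increasing_in_Un)
    fix y x assume y: "y \<in> {y \<in> Y. y < m}" and x: "x \<in> {x \<in> X. b \<le> x}"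
    have "position w y < position w m" using increasing_inD[OF Y(1) _ Y(2)] y by blast
    moreover have "position w b \<le> position w x" using increasing_in_le[OF X(1) X(3)] x by blast
    moreover have "position w y \<noteq> position w b"
      using position_eq_iff increasing_in_set X(1,3) Y(1,3) y by blast
    ultimately show "y < x \<and> position w y < position w x" using x y between adj by auto
  qed (auto intro: increasing_in_subset[OF X(1)] increasing_in_subset[OF Y(1)])
qed

lemma separating_cover_left:
  fixes k :: nat
  assumes C: "\<forall>i<k. increasing_in w (C i)" and m: "m \<in> set w" and between: "a < m" "m < b"
    and ab: "position w b = Suc (position w a)" and left: "position w a = Suc (position w m)"
  shows "\<exists>D. (\<forall>i<k. increasing_in w (D i) \<and> \<not> (a \<in> D i \<and> b \<in> D i))
             \<and> card (\<Union>i<k. C i) \<le> card (\<Union>i<k. D i)"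
proof (rule separating_cover[OF C ab between])
  fix X assume "increasing_in w X" "a \<in> X" "b \<in> X" "m \<notin> X"
  then show "\<exists>c\<in>{a, b}. increasing_in w (insert m (X - {c}))"
    using increasing_in_replace_left[OF _ _ _ _ m between ab left] by blast
next
  fix X Y assume XY: "increasing_in w X" "increasing_in w Y" "a \<in> X" "b \<in> X" "m \<in> Y" "a \<notin> Y" "b \<notin> Y"
  let ?S = "{x \<in> X. x \<le> a} \<union> {y \<in> Y. m < y}" and ?T = "{y \<in> Y. y \<le> m} \<union> {x \<in> X. b \<le> x}"
  have "increasing_in w ?S" "increasing_in w ?T"
    using increasing_in_exchange_left[OF XY(1,3,4,2,5,6) between ab left] by auto
  moreover have "?S \<union> ?T = X \<union> Y"
    using increasing_in_adjacent_gap[OF XY(1,3,4) ab] by fastforce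
  moreover have "\<not> (a \<in> ?S \<and> b \<in> ?S)" "\<not> (a \<in> ?T \<and> b \<in> ?T)" using XY(6,7) between by auto
  ultimately show "\<exists>S T. increasing_in w S \<and> increasing_in w T \<and> S \<union> T = X \<union> Y
                          \<and> \<not> (a \<in> S \<and> b \<in> S) \<and> \<not> (a \<in> T \<and> b \<in> T)" by blast
qed

lemma separating_cover_right:
  fixes k :: nat
  assumes C: "\<forall>i<k. increasing_in w (C i)" and m: "m \<in> set w" and between: "a < m" "m < b"
    and ab: "position w b = Suc (position w a)" and right: "position w m = Suc (position w b)"
  shows "\<exists>D. (\<forall>i<k. increasing_in w (D i) \<and> \<not> (a \<in> D i \<and> b \<in> D i))
             \<and> card (\<Union>i<k. C i) \<le> card (\<Union>i<k. D i)"
proof (rule separating_cover[OF C ab between])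
  fix X assume "increasing_in w X" "a \<in> X" "b \<in> X" "m \<notin> X"
  then show "\<exists>c\<in>{a, b}. increasing_in w (insert m (X - {c}))"
    using increasing_in_replace_right[OF _ _ _ _ m between ab right] by blast
next
  fix X Y assume XY: "increasing_in w X" "increasing_in w Y" "a \<in> X" "b \<in> X" "m \<in> Y" "a \<notin> Y" "b \<notin> Y"
  let ?S = "{x \<in> X. x \<le> a} \<union> {y \<in> Y. m \<le> y}" and ?T = "{y \<in> Y. y < m} \<union> {x \<in> X. b \<le> x}"
  have "increasing_in w ?S" "increasing_in w ?T"
    using increasing_in_exchange_right[OF XY(1,3,4,2,5,7) between ab right] by auto
  moreover have "?S \<union> ?T = X \<union> Y"
    using increasing_in_adjacent_gap[OF XY(1,3,4) ab] by fastforce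
  moreover have "\<not> (a \<in> ?S \<and> b \<in> ?S)" "\<not> (a \<in> ?T \<and> b \<in> ?T)" using XY(6,7) between by auto
  ultimately show "\<exists>S T. increasing_in w S \<and> increasing_in w T \<and> S \<union> T = X \<union> Y
                          \<and> \<not> (a \<in> S \<and> b \<in> S) \<and> \<not> (a \<in> T \<and> b \<in> T)" by blast
qed

lemma greene_num_le_swap_of_between:
  assumes d: "distinct (u @ a # b # v)"
    and between: "a < m" "m < b" and m: "m \<in> set (u @ a # b # v)"
    and adj: "position (u @ a # b # v) a = Suc (position (u @ a # b # v) m)
            \<or> position (u @ a # b # v) m = Suc (position (u @ a # b # v) b)"
  shows "greene_num k (u @ a # b # v) \<le> greene_num k (u @ b # a # v)"
proof -
  have ab: "position (u @ a # b # v) b = Suc (position (u @ a # b # v) a)"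
    using position_swap(2)[OF d] .
  have "greene_num k (u @ a # b # v) \<le> greene_num k (u @ b # a # v) + 0"
  proof (rule greene_num_le_by_transfer)
    fix C assume C: "\<forall>i<k. increasing_in (u @ a # b # v) (C i)"
    obtain D where D: "\<forall>i<k. increasing_in (u @ a # b # v) (D i) \<and> \<not> (a \<in> D i \<and> b \<in> D i)"
      "card (\<Union>i<k. C i) \<le> card (\<Union>i<k. D i)"
      using adj separating_cover_left[OF C m between ab] separating_cover_right[OF C m between ab] by blast
    have "\<forall>i<k. increasing_in (u @ b # a # v) (D i)"
      using D(1) increasing_in_swap[OF d] by blast
    then show "\<exists>D. (\<forall>i<k. increasing_in (u @ b # a # v) (D i)) \<and> card (\<Union>i<k. C i) \<le> card (\<Union>i<k. D i) + 0"
      using D(2) by auto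
  qed
  then show ?thesis by simp
qed

inductive knuth_step :: "nat list \<Rightarrow> nat list \<Rightarrow> bool" where
  yxz: "x < y \<Longrightarrow> y < z \<Longrightarrow> knuth_step (u @ [y, x, z] @ v) (u @ [y, z, x] @ v)"
| xzy: "x < y \<Longrightarrow> y < z \<Longrightarrow> knuth_step (u @ [x, z, y] @ v) (u @ [z, x, y] @ v)"

abbreviation knuth_equiv :: "nat list \<Rightarrow> nat list \<Rightarrow> bool" where
  "knuth_equiv \<equiv> equivclp knuth_step"

lemma knuth_step_distinct_iff: "knuth_step u v \<Longrightarrow> distinct u \<longleftrightarrow> distinct v"
  by (induction rule: knuth_step.induct) auto

lemma knuth_step_append: "knuth_step u v \<Longrightarrow> knuth_step (p @ u @ q) (p @ v @ q)"
proof (induction rule: knuth_step.induct)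
  case (yxz x y z u v)
  then show ?case using knuth_step.yxz[of x y z "p @ u" "v @ q"] by simp
next
  case (xzy x y z u v)
  then show ?case using knuth_step.xzy[of x y z "p @ u" "v @ q"] by simp
qed

lemma knuth_equiv_append: "knuth_equiv u v \<Longrightarrow> knuth_equiv (p @ u @ q) (p @ v @ q)"
proof (induction rule: equivclp_induct)
  case (step y z)
  then show ?case using knuth_step_append equivclp_into_equivclp by metis
qed simp

lemma greene_num_knuth_step:
  assumes "knuth_step w w'" "distinct w"
  shows "greene_num k w = greene_num k w'"
  using assms
proof (induction rule: knuth_step.induct)
  case (yxz x y z u v)
  then have d: "distinct ((u @ [y]) @ x # z # v)" by simp
  have "greene_num k ((u @ [y]) @ z # x # v) \<le> greene_num k ((u @ [y]) @ x # z # v)"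
    using greene_num_swap_ascent_le[OF d] yxz by simp
  moreover have "greene_num k ((u @ [y]) @ x # z # v) \<le> greene_num k ((u @ [y]) @ z # x # v)"
    using d yxz by (intro greene_num_le_swap_of_between[where m = y]) (auto simp: position_append)
  ultimately show ?case by simp
next
  case (xzy x y z u v)
  then have d: "distinct (u @ x # z # y # v)" by simp
  have "greene_num k (u @ z # x # y # v) \<le> greene_num k (u @ x # z # y # v)"
    using greene_num_swap_ascent_le[OF d] xzy by simp
  moreover have "greene_num k (u @ x # z # y # v) \<le> greene_num k (u @ z # x # y # v)"
    using d xzy by (intro greene_num_le_swap_of_between[where m = y]) (auto simp: position_append)
  ultimately show ?case by simp
qed

lemma greene_num_knuth_equiv:
  assumes "knuth_equiv u v" "distinct u"
  shows "greene_num k u = greene_num k v \<and> distinct v"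
  using assms
proof (induction rule: equivclp_induct)
  case (step y z)
  then show ?case using greene_num_knuth_step knuth_step_distinct_iff by metis
qed simp

section \<open>Row insertion\<close>

fun reading_word :: "nat list list \<Rightarrow> nat list" where
  "reading_word [] = []"
| "reading_word (r # T) = reading_word T @ r"

definition column_strict :: "nat list \<Rightarrow> nat list \<Rightarrow> bool" where
  "column_strict r s \<longleftrightarrow> length s \<le> length r \<and> (\<forall>c<length s. r ! c < s ! c)"

fun is_tableau :: "nat list list \<Rightarrow> bool" where
  "is_tableau [] = True"
| "is_tableau (r # T) \<longleftrightarrow> sorted_wrt (<) r \<and> is_tableau T \<and> (T \<noteq> [] \<longrightarrow> column_strict r (hd T))"

abbreviation bump_index :: "nat list \<Rightarrow> nat \<Rightarrow> nat" where
  "bump_index r x \<equiv> length (takeWhile (\<lambda>y. y \<le> x) r)"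

lemma bump_index_less_length: "bump_index r x \<noteq> length r \<Longrightarrow> bump_index r x < length r"
  using length_takeWhile_le le_neq_implies_less by blast

lemma row_insert_Cons:
  "row_insert (r # rs) x =
     (if bump_index r x = length r then (r @ [x]) # rs
      else r[bump_index r x := x] # row_insert rs (r ! bump_index r x))"
proof (cases "bump_index r x = length r")
  case True
  then have "dropWhile (\<lambda>y. y \<le> x) r = []" by (simp add: dropWhile_eq_drop)
  moreover have "takeWhile (\<lambda>y. y \<le> x) r = r"
    using True by (metis takeWhile_eq_take take_all order_refl)
  ultimately show ?thesis using True by simp
next
  case False
  then have lt: "bump_index r x < length r" by (rule bump_index_less_length)
  have "dropWhile (\<lambda>y. y \<le> x) r \<noteq> []" using lt by (simp add: dropWhile_eq_drop)
  moreover have "takeWhile (\<lambda>y. y \<le> x) r @ x # tl (dropWhile (\<lambda>y. y \<le> x) r) = r[bump_index r x := x]"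
    using lt by (metis dropWhile_eq_drop takeWhile_eq_take upd_conv_take_nth_drop drop_Suc tl_drop)
  moreover have "hd (dropWhile (\<lambda>y. y \<le> x) r) = r ! bump_index r x"
    using lt by (simp add: dropWhile_eq_drop hd_drop_conv_nth)
  ultimately show ?thesis using False by (auto simp: Let_def)
qed

declare row_insert.simps(2)[simp del]

lemma nth_le_of_less_bump_index: "i < bump_index r x \<Longrightarrow> r ! i \<le> x"
  by (metis nth_mem set_takeWhileD takeWhile_nth)

lemma less_nth_of_bump_index_le:
  assumes "sorted_wrt (<) r" "bump_index r x \<le> i" "i < length r"
  shows "x < r ! i"
proof -
  have "x < r ! bump_index r x"
    using nth_length_takeWhile[of "\<lambda>y. y \<le> x" r] assms(2,3) by simp
  also have "\<dots> \<le> r ! i" using assms by (metis le_eq_less_or_eq sorted_wrt_nth_less order.strict_implies_order)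
  finally show ?thesis .
qed

lemma insert_nth_set_list_update:
  assumes "q < length r"
  shows "insert (r ! q) (set (r[q := x])) = insert x (set r)"
proof -
  have "r = take q r @ r ! q # drop (Suc q) r" "r[q := x] = take q r @ x # drop (Suc q) r"
    using assms by (simp_all add: id_take_nth_drop upd_conv_take_nth_drop)
  then show ?thesis by (metis insert_commute list.simps(15) set_append Un_insert_right)
qed

lemma set_concat_row_insert: "set (concat (row_insert T x)) = insert x (set (concat T))"
proof (induction T arbitrary: x)
  case (Cons r rs)
  show ?case
  proof (cases "bump_index r x = length r")
    case False
    then have "set (concat (row_insert (r # rs) x))
                 = insert (r ! bump_index r x) (set (r[bump_index r x := x])) \<union> set (concat rs)"
      using Cons[of "r ! bump_index r x"] by (auto simp: row_insert_Cons)
    then show ?thesis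
      using insert_nth_set_list_update[OF bump_index_less_length[OF False]] by auto
  qed (simp add: row_insert_Cons)
qed simp

lemma length_concat_row_insert: "length (concat (row_insert T x)) = Suc (length (concat T))"
  by (induction T arbitrary: x) (auto simp: row_insert_Cons)

lemma distinct_concat_row_insert:
  assumes "distinct (concat T)" "x \<notin> set (concat T)"
  shows "distinct (concat (row_insert T x))"
proof (rule card_distinct)
  show "card (set (concat (row_insert T x))) = length (concat (row_insert T x))"
    unfolding set_concat_row_insert length_concat_row_insert
    using assms distinct_card[OF assms(1)] by (simp del: set_concat)
qed

lemma sorted_wrt_list_update_bump:
  assumes s: "sorted_wrt (<) r" and lt: "bump_index r x < length r" and xn: "x \<notin> set r"
  shows "sorted_wrt (<) (r[bump_index r x := x])"
proof -
  let ?q = "bump_index r x"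
  have "r[?q := x] ! i < r[?q := x] ! j" if ij: "i < j" "j < length r" for i j
  proof -
    consider "i = ?q" | "j = ?q" | "i \<noteq> ?q" "j \<noteq> ?q" using ij by blast
    then show ?thesis
    proof cases
      case 1
      then show ?thesis using less_nth_of_bump_index_le[OF s, of x j] ij lt by simp
    next
      case 2
      then have "r ! i \<le> x" "r ! i \<noteq> x"
        using nth_le_of_less_bump_index[where i = i and r = r and x = x] ij xn by (auto dest: nth_mem)
      then show ?thesis using 2 ij lt by simp
    next
      case 3
      then show ?thesis using s ij by (simp add: sorted_wrt_iff_nth_less)
    qed
  qed
  then show ?thesis by (simp add: sorted_wrt_iff_nth_less)
qed

lemma sorted_wrt_snoc_bump:
  assumes "sorted_wrt (<) r" "bump_index r x = length r" "x \<notin> set r"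
  shows "sorted_wrt (<) (r @ [x])"
proof -
  have "y \<le> x" if "y \<in> set r" for y
    using that assms(2) by (metis in_set_conv_nth nth_le_of_less_bump_index)
  then show ?thesis using assms(1,3) by (auto simp: sorted_wrt_append order.strict_iff_order)
qed

lemma column_strict_snoc: "column_strict r s \<Longrightarrow> column_strict (r @ [x]) s"
  unfolding column_strict_def by (auto simp: nth_append)

lemma bump_index_le_of_column_strict:
  assumes "column_strict r s" "q < length r"
  shows "bump_index s (r ! q) \<le> q"
proof (rule ccontr)
  assume gt: "\<not> ?thesis"
  then have "s ! q \<le> r ! q" using nth_le_of_less_bump_index[where i = q and r = s and x = "r ! q"] by simp
  moreover have "q < length s" using gt length_takeWhile_le[of "\<lambda>y. y \<le> r ! q" s] by linarith
  ultimately show False using assms(1) unfolding column_strict_def by fastforce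
qed

lemma nth_list_update_bump:
  assumes s: "sorted_wrt (<) r" and lt: "bump_index r x < length r"
  shows "c \<le> bump_index r x \<Longrightarrow> r[bump_index r x := x] ! c < r ! bump_index r x"
    and "c < length r \<Longrightarrow> r[bump_index r x := x] ! c \<le> r ! c"
proof -
  have x: "x < r ! bump_index r x" using less_nth_of_bump_index_le[OF s _ lt] by simp
  show "c \<le> bump_index r x \<Longrightarrow> r[bump_index r x := x] ! c < r ! bump_index r x"
    using x s lt by (cases "c = bump_index r x") (auto simp: sorted_wrt_iff_nth_less)
  show "c < length r \<Longrightarrow> r[bump_index r x := x] ! c \<le> r ! c"
    using x by (cases "c = bump_index r x") auto
qed

lemma column_strict_bump_snoc:
  assumes s: "sorted_wrt (<) r" and lt: "bump_index r x < length r" and rs: "column_strict r t"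
    and full: "bump_index t (r ! bump_index r x) = length t"
  shows "column_strict (r[bump_index r x := x]) (t @ [r ! bump_index r x])"
proof -
  let ?q = "bump_index r x"
  have short: "length t \<le> ?q" using bump_index_le_of_column_strict[OF rs lt] full by simp
  have "r[?q := x] ! c < (t @ [r ! ?q]) ! c" if "c < Suc (length t)" for c
  proof (cases "c < length t")
    case True
    then show ?thesis
      using nth_list_update_bump(2)[OF s lt, of c] rs short lt unfolding column_strict_def
      by (auto simp: nth_append)
  next
    case False
    then show ?thesis using that short nth_list_update_bump(1)[OF s lt, of c] by (simp add: nth_append)
  qed
  then show ?thesis using short lt unfolding column_strict_def by simp
qed

lemma column_strict_bump_update:
  assumes s: "sorted_wrt (<) r" and lt: "bump_index r x < length r" and rs: "column_strict r t"
  shows "column_strict (r[bump_index r x := x]) (t[bump_index t (r ! bump_index r x) := r ! bump_index r x])"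
proof -
  let ?q = "bump_index r x" and ?q' = "bump_index t (r ! bump_index r x)"
  have qq: "?q' \<le> ?q" using bump_index_le_of_column_strict[OF rs lt] .
  have "r[?q := x] ! c < t[?q' := r ! ?q] ! c" if "c < length t" for c
  proof (cases "c = ?q'")
    case True
    then show ?thesis using that qq nth_list_update_bump(1)[OF s lt, of c] by simp
  next
    case False
    then show ?thesis
      using that nth_list_update_bump(2)[OF s lt, of c] rs unfolding column_strict_def by fastforce
  qed
  then show ?thesis using rs unfolding column_strict_def by simp
qed

lemma column_strict_row_insert:
  assumes s: "sorted_wrt (<) r" and lt: "bump_index r x < length r"
    and rs: "rs \<noteq> [] \<longrightarrow> column_strict r (hd rs)"
  shows "column_strict (r[bump_index r x := x]) (hd (row_insert rs (r ! bump_index r x)))"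
proof (cases rs)
  case Nil
  then show ?thesis using column_strict_bump_snoc[OF s lt, of "[]"] by (simp add: column_strict_def)
next
  case (Cons t ts)
  then have "column_strict r t" using rs by simp
  then show ?thesis
    using Cons column_strict_bump_snoc[OF s lt] column_strict_bump_update[OF s lt]
      bump_index_less_length by (auto simp: row_insert_Cons)
qed

lemma is_tableau_row_insert:
  "is_tableau T \<Longrightarrow> distinct (concat T) \<Longrightarrow> x \<notin> set (concat T) \<Longrightarrow> is_tableau (row_insert T x)"
proof (induction T arbitrary: x)
  case (Cons r rs)
  have s: "sorted_wrt (<) r" and xn: "x \<notin> set r" using Cons.prems by auto
  show ?case
  proof (cases "bump_index r x = length r")
    case True
    then show ?thesis
      using Cons.prems sorted_wrt_snoc_bump[OF s True xn] column_strict_snoc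
      by (auto simp: row_insert_Cons)
  next
    case False
    then have lt: "bump_index r x < length r" by (rule bump_index_less_length)
    have "r ! bump_index r x \<notin> set (concat rs)" using Cons.prems(2) lt by (auto dest: nth_mem)
    then have "is_tableau (row_insert rs (r ! bump_index r x))"
      using Cons.IH Cons.prems by simp
    then show ?thesis
      using False Cons.prems sorted_wrt_list_update_bump[OF s lt xn] column_strict_row_insert[OF s lt]
      by (auto simp: row_insert_Cons)
  qed
qed simp

lemma knuth_equiv_move_smaller_left:
  "sorted_wrt (<) (y # b) \<Longrightarrow> x < y \<Longrightarrow> knuth_equiv (y # b @ [x]) (y # x # b)"
proof (induction b arbitrary: y)
  case (Cons c b)
  have "knuth_equiv (c # b @ [x]) (c # x # b)" using Cons by simp
  then have "knuth_equiv (y # c # b @ [x]) (y # c # x # b)"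
    using knuth_equiv_append[of _ _ "[y]" "[]"] by simp
  moreover have "knuth_step ([] @ [y, x, c] @ b) ([] @ [y, c, x] @ b)"
    using Cons.prems by (intro knuth_step.yxz) auto
  ultimately show ?case by (auto intro: equivclp_trans)
qed simp

lemma knuth_equiv_move_larger_left:
  "sorted_wrt (<) (a @ [m]) \<Longrightarrow> m < y \<Longrightarrow> knuth_equiv (a @ y # m # v) (y # a @ m # v)"
proof (induction a)
  case (Cons a0 a)
  have "knuth_equiv (a @ y # m # v) (y # a @ m # v)" using Cons by simp
  then have "knuth_equiv (a0 # a @ y # m # v) (a0 # y # a @ m # v)"
    using knuth_equiv_append[of _ _ "[a0]" "[]"] by simp
  moreover obtain e v' where e: "a @ m # v = e # v'" "e \<in> set (a @ [m])" by (cases a) auto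
  then have "knuth_step ([] @ [a0, y, e] @ v') ([] @ [y, a0, e] @ v')"
    using Cons.prems by (intro knuth_step.xzy) (auto simp: sorted_wrt_append)
  ultimately show ?case using e(1) by (auto intro: equivclp_trans)
qed simp

text \<open>Inserting \<open>x\<close> into a row is a sequence of Knuth moves: \<open>x\<close> travels left to its slot, then the
  bumped entry travels to the front.\<close>
lemma knuth_equiv_row_bump:
  assumes s: "sorted_wrt (<) r" and lt: "bump_index r x < length r" and xn: "x \<notin> set r"
  shows "knuth_equiv (r @ [x]) (r ! bump_index r x # r[bump_index r x := x])"
proof -
  let ?q = "bump_index r x" let ?a = "take ?q r" let ?y = "r ! ?q" let ?b = "drop (Suc ?q) r"
  have r: "r = ?a @ ?y # ?b" and r': "r[?q := x] = ?a @ x # ?b"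
    using lt by (simp_all add: id_take_nth_drop upd_conv_take_nth_drop)
  have xy: "x < ?y" using less_nth_of_bump_index_le[OF s _ lt] by simp
  have "sorted_wrt (<) (?y # ?b)" using s r by (metis sorted_wrt_append)
  then have "knuth_equiv (?a @ ?y # ?b @ [x]) (?a @ ?y # x # ?b)"
    using knuth_equiv_move_smaller_left[OF _ xy] knuth_equiv_append[of _ _ ?a "[]"] by simp
  moreover have "sorted_wrt (<) (?a @ [x])"
  proof -
    have "z < x" if "z \<in> set ?a" for z
    proof -
      obtain i where "i < ?q" "z = r ! i" using \<open>z \<in> set ?a\<close> lt by (auto simp: in_set_conv_nth)
      then show ?thesis
        using nth_le_of_less_bump_index[where r = r] xn \<open>z \<in> set ?a\<close>
        by (metis in_set_takeD order.not_eq_order_implies_strict)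
    qed
    moreover have "sorted_wrt (<) ?a" using s r by (metis sorted_wrt_append)
    ultimately show ?thesis by (simp add: sorted_wrt_append)
  qed
  then have "knuth_equiv (?a @ ?y # x # ?b) (?y # ?a @ x # ?b)"
    using knuth_equiv_move_larger_left xy by blast
  ultimately have "knuth_equiv (?a @ ?y # ?b @ [x]) (?y # ?a @ x # ?b)" by (rule equivclp_trans)
  then show ?thesis using r r' by (metis append.assoc append_Cons)
qed

lemma knuth_equiv_reading_word_row_insert:
  "is_tableau T \<Longrightarrow> distinct (concat T) \<Longrightarrow> x \<notin> set (concat T) \<Longrightarrow>
    knuth_equiv (reading_word (row_insert T x)) (reading_word T @ [x])"
proof (induction T arbitrary: x)
  case (Cons r rs)
  have s: "sorted_wrt (<) r" and xn: "x \<notin> set r" using Cons.prems by auto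
  show ?case
  proof (cases "bump_index r x = length r")
    case False
    then have lt: "bump_index r x < length r" by (rule bump_index_less_length)
    let ?y = "r ! bump_index r x" and ?r' = "r[bump_index r x := x]"
    have "?y \<notin> set (concat rs)" using Cons.prems(2) lt by (auto dest: nth_mem)
    then have IH: "knuth_equiv (reading_word (row_insert rs ?y)) (reading_word rs @ [?y])"
      using Cons.IH Cons.prems by simp
    have "knuth_equiv (reading_word (row_insert rs ?y) @ ?r') (reading_word rs @ ?y # ?r')"
      using knuth_equiv_append[OF IH, of "[]" ?r'] by simp
    moreover have "knuth_equiv (reading_word rs @ ?y # ?r') (reading_word rs @ r @ [x])"
      using knuth_equiv_append[OF knuth_equiv_row_bump[OF s lt xn], of "reading_word rs" "[]"]
      by (simp add: equivclp_sym)
    ultimately show ?thesis using False by (auto simp: row_insert_Cons intro: equivclp_trans)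
  qed (simp add: row_insert_Cons)
qed simp

lemma foldl_row_insert:
  "is_tableau T \<Longrightarrow> distinct (concat T @ w) \<Longrightarrow>
    knuth_equiv (reading_word (foldl row_insert T w)) (reading_word T @ w)
    \<and> is_tableau (foldl row_insert T w) \<and> distinct (concat (foldl row_insert T w))"
proof (induction w arbitrary: T)
  case (Cons x w)
  have xn: "x \<notin> set (concat T)" and dT: "distinct (concat T)" using Cons.prems by auto
  have "is_tableau (row_insert T x)" by (rule is_tableau_row_insert[OF Cons.prems(1) dT xn])
  moreover have "distinct (concat (row_insert T x) @ w)"
    using distinct_concat_row_insert[OF dT xn] Cons.prems(2)
    by (auto simp del: set_concat simp: set_concat_row_insert)
  moreover have "knuth_equiv (reading_word (row_insert T x) @ w) (reading_word T @ [x] @ w)"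
    using knuth_equiv_append[OF knuth_equiv_reading_word_row_insert[OF Cons.prems(1) dT xn], of "[]" w]
    by simp
  ultimately show ?case using Cons.IH by (auto intro: equivclp_trans)
qed simp

lemma rsk_P_tableau:
  "distinct w \<Longrightarrow> knuth_equiv (reading_word (rsk_P w)) w \<and> is_tableau (rsk_P w) \<and> distinct (concat (rsk_P w))"
  using foldl_row_insert[of "[]" w] unfolding rsk_P_def by simp

section \<open>Greene's invariant of a tableau\<close>

lemma set_reading_word [simp]: "set (reading_word T) = set (concat T)"
  by (induction T) auto

lemma length_reading_word: "length (reading_word T) = length (concat T)"
  by (induction T) auto

lemma distinct_reading_word: "distinct (concat T) \<Longrightarrow> distinct (reading_word T)"
  by (metis card_distinct distinct_card length_reading_word set_reading_word)

lemma increasing_in_append_left: "increasing_in u C \<Longrightarrow> increasing_in (u @ v) C"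
  unfolding increasing_in_def by (auto simp: position_append)

lemma increasing_in_append_right: "increasing_in v C \<Longrightarrow> C \<inter> set u = {} \<Longrightarrow> increasing_in (u @ v) C"
  unfolding increasing_in_def by (auto simp: position_append)

lemma increasing_in_set_sorted: "sorted_wrt (<) r \<Longrightarrow> increasing_in r (set r)"
  unfolding increasing_in_def
  by (metis sorted_wrt_nth_less nth_position position_less_length not_less_iff_gr_or_eq order.asym subsetI)

lemma row_increasing_in_reading_word:
  "is_tableau T \<Longrightarrow> distinct (concat T) \<Longrightarrow> i < length T \<Longrightarrow> increasing_in (reading_word T) (set (T ! i))"
proof (induction T arbitrary: i)
  case (Cons r rs)
  show ?case
  proof (cases i)
    case 0
    then show ?thesis
      using Cons.prems increasing_in_set_sorted increasing_in_append_right[of r "set r" "reading_word rs"]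
      by auto
  next
    case (Suc j)
    then show ?thesis using Cons increasing_in_append_left by simp
  qed
qed simp

lemma tableau_column_less:
  "is_tableau T \<Longrightarrow> i < i' \<Longrightarrow> i' < length T \<Longrightarrow> c < length (T ! i') \<Longrightarrow>
    c < length (T ! i) \<and> T ! i ! c < T ! i' ! c"
proof (induction T arbitrary: i i')
  case (Cons r rs)
  obtain j where j: "i' = Suc j" using Cons.prems(2) by (cases i') auto
  show ?case
  proof (cases i)
    case 0
    have top: "column_strict r (hd rs)" "rs \<noteq> []" using Cons.prems j by auto
    show ?thesis
    proof (cases j)
      case 0
      then show ?thesis using top j Cons.prems(4) \<open>i = 0\<close> unfolding column_strict_def by (simp add: hd_conv_nth)
    next
      case (Suc j0)
      then have "c < length (rs ! 0) \<and> rs ! 0 ! c < rs ! j ! c"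
        using Cons.IH[of 0 j] j Cons.prems by simp
      then show ?thesis using top \<open>i = 0\<close> j unfolding column_strict_def by (auto simp: hd_conv_nth)
    qed
  next
    case (Suc i0)
    then show ?thesis using Cons.IH[of i0 j] j Cons.prems by simp
  qed
qed simp

text \<open>The reading word lists the rows from bottom to top, so within a column larger entries come first.\<close>
lemma position_reading_word_column:
  "is_tableau T \<Longrightarrow> distinct (concat T) \<Longrightarrow> i < i' \<Longrightarrow> i' < length T \<Longrightarrow> c < length (T ! i') \<Longrightarrow>
    position (reading_word T) (T ! i' ! c) < position (reading_word T) (T ! i ! c)"
proof (induction T arbitrary: i i')
  case (Cons r rs)
  obtain j where j: "i' = Suc j" using Cons.prems(3) by (cases i') auto
  have cl: "c < length ((r # rs) ! i)" using tableau_column_less[OF Cons.prems(1,3,4,5)] by simp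
  have lower: "rs ! j ! c \<in> set (reading_word rs)"
    using Cons.prems j by (auto intro!: bexI[of _ "rs ! j"])
  show ?case
  proof (cases i)
    case 0
    then have "r ! c \<notin> set (reading_word rs)" using Cons.prems(2) cl by (auto dest: nth_mem)
    then show ?thesis
      using 0 j lower position_less_length[OF lower] by (simp add: position_append)
  next
    case (Suc i0)
    then have "rs ! i0 ! c \<in> set (reading_word rs)"
      using cl Cons.prems j by (auto intro!: bexI[of _ "rs ! i0"])
    then show ?thesis
      using Cons.IH[of i0 j] Suc j Cons.prems lower by (simp add: position_append)
  qed
qed simp

lemma tableau_rows_disjoint:
  "distinct (concat T) \<Longrightarrow> i < j \<Longrightarrow> j < length T \<Longrightarrow> set (T ! i) \<inter> set (T ! j) = {}"
proof (induction T arbitrary: i j)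
  case (Cons r rs)
  obtain j0 where j: "j = Suc j0" using Cons.prems by (cases j) auto
  show ?case
  proof (cases i)
    case 0
    have "set (rs ! j0) \<subseteq> set (concat rs)" using Cons.prems j by auto
    then show ?thesis using 0 j Cons.prems(1) by auto
  qed (use Cons j in simp)
qed simp

lemma distinct_tableau_row: "distinct (concat T) \<Longrightarrow> i < length T \<Longrightarrow> distinct (T ! i)"
  by (induction T arbitrary: i) (auto simp: nth_Cons split: nat.splits)

lemma sum_part_map_length:
  "(\<Sum>i<k. part (map length T) i) = (\<Sum>i | i < k \<and> i < length T. length (T ! i))"
proof -
  have "(\<Sum>i<k. part (map length T) i) = (\<Sum>i<k. if i < length T then length (T ! i) else 0)"
    by (rule sum.cong) (auto simp: part_def)
  also have "\<dots> = (\<Sum>i | i \<in> {..<k} \<and> i < length T. length (T ! i))"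
    by (rule sum.inter_filter[symmetric]) simp
  finally show ?thesis by simp
qed

lemma greene_num_reading_word_ge:
  assumes t: "is_tableau T" and d: "distinct (concat T)"
  shows "(\<Sum>i<k. part (map length T) i) \<le> greene_num k (reading_word T)"
proof -
  define C where "C i = (if i < length T then set (T ! i) else {})" for i
  have "card (\<Union>i<k. C i) = (\<Sum>i<k. card (C i))"
  proof (rule card_UN_disjoint)
    show "\<forall>i\<in>{..<k}. \<forall>j\<in>{..<k}. i \<noteq> j \<longrightarrow> C i \<inter> C j = {}"
      unfolding C_def using tableau_rows_disjoint[OF d] by (metis Int_commute inf_bot_right nat_neq_iff)
  qed (auto simp: C_def)
  also have "\<dots> = (\<Sum>i<k. part (map length T) i)"
    by (rule sum.cong) (auto simp: C_def part_def distinct_card[OF distinct_tableau_row[OF d]])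
  finally show ?thesis
    using card_le_greene_num[of k "reading_word T" C] row_increasing_in_reading_word[OF t d]
    unfolding C_def by (auto simp: increasing_in_def)
qed

definition column_rows :: "nat list list \<Rightarrow> nat \<Rightarrow> nat set" where
  "column_rows T c = {i. i < length T \<and> c < length (T ! i)}"

lemma down_closed_eq_lessThan:
  fixes H :: "nat set"
  assumes "finite H" "\<And>i j. i \<in> H \<Longrightarrow> j < i \<Longrightarrow> j \<in> H"
  shows "H = {..<card H}"
proof -
  have "H \<subseteq> {..<card H}"
  proof
    fix n assume "n \<in> H"
    then have "{..n} \<subseteq> H" using assms(2) by (auto simp: le_less)
    then have "card {..n} \<le> card H" using assms(1) by (rule card_mono[rotated])
    then show "n \<in> {..<card H}" by simp
  qed
  then show ?thesis by (intro card_subset_eq) auto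
qed

lemma column_rows_eq_lessThan: "is_tableau T \<Longrightarrow> column_rows T c = {..<card (column_rows T c)}"
  by (rule down_closed_eq_lessThan) (auto simp: column_rows_def dest: tableau_column_less)

lemma card_increasing_in_inter_column:
  assumes t: "is_tableau T" and d: "distinct (concat T)" and X: "increasing_in (reading_word T) X"
  shows "card (X \<inter> (\<lambda>i. T ! i ! c) ` column_rows T c) \<le> 1"
proof -
  have "i = i'" if "i \<in> column_rows T c" "i' \<in> column_rows T c" "T ! i ! c \<in> X" "T ! i' ! c \<in> X" for i i'
  proof (rule ccontr)
    have no_pair: False if "j < j'" "j' \<in> column_rows T c" "T ! j ! c \<in> X" "T ! j' ! c \<in> X" for j j'
    proof -
      have j': "j' < length T" "c < length (T ! j')" using that(2) by (auto simp: column_rows_def)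
      have "position (reading_word T) (T ! j ! c) < position (reading_word T) (T ! j' ! c)"
        using increasing_inD[OF X that(3,4)] tableau_column_less[OF t that(1) j'] by blast
      then show False using position_reading_word_column[OF t d that(1) j'] by simp
    qed
    assume "i \<noteq> i'"
    then show False using no_pair that by (metis nat_neq_iff)
  qed
  then show ?thesis
    by (subst One_nat_def, subst card_le_Suc0_iff_eq) (auto simp: column_rows_def)
qed

lemma card_cover_inter_column:
  fixes k :: nat
  assumes t: "is_tableau T" and d: "distinct (concat T)" and C: "\<forall>l<k. increasing_in (reading_word T) (C l)"
  shows "card ((\<Union>l<k. C l) \<inter> (\<lambda>i. T ! i ! c) ` column_rows T c) \<le> card {i \<in> column_rows T c. i < k}"
proof -
  let ?col = "(\<lambda>i. T ! i ! c) ` column_rows T c"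
  have fin: "finite (column_rows T c)" by (simp add: column_rows_def)
  have "card ((\<Union>l<k. C l) \<inter> ?col) \<le> (\<Sum>l<k. card (C l \<inter> ?col))"
    using card_UN_le[of "{..<k}" "\<lambda>l. C l \<inter> ?col"] by (simp add: Int_UN_distrib2)
  also have "\<dots> \<le> (\<Sum>l<k. 1)"
    using card_increasing_in_inter_column[OF t d] C by (intro sum_mono) auto
  finally have "card ((\<Union>l<k. C l) \<inter> ?col) \<le> k" by simp
  moreover have "card ((\<Union>l<k. C l) \<inter> ?col) \<le> card (column_rows T c)"
    using card_image_le[OF fin] card_mono[OF finite_imageI[OF fin], of "(\<Union>l<k. C l) \<inter> ?col"]
    by (meson Int_lower2 order.trans)
  moreover have "{i \<in> column_rows T c. i < k} = {..<min (card (column_rows T c)) k}"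
    by (subst column_rows_eq_lessThan[OF t]) auto
  ultimately show ?thesis by simp
qed

lemma sum_card_column_rows:
  assumes "\<forall>i<length T. length (T ! i) \<le> N"
  shows "(\<Sum>c<N. card {i \<in> column_rows T c. i < k}) = (\<Sum>i | i < k \<and> i < length T. length (T ! i))"
proof -
  let ?F = "{i. i < k \<and> i < length T}"
  have "(\<Sum>c<N. card {i \<in> column_rows T c. i < k}) = (\<Sum>c<N. \<Sum>i\<in>?F. if c < length (T ! i) then 1 else 0)"
  proof (rule sum.cong)
    fix c
    have "{i \<in> column_rows T c. i < k} = {i \<in> ?F. c < length (T ! i)}" by (auto simp: column_rows_def)
    then show "card {i \<in> column_rows T c. i < k} = (\<Sum>i\<in>?F. if c < length (T ! i) then 1 else 0)"
      by (simp add: sum.inter_filter[symmetric])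
  qed simp
  also have "\<dots> = (\<Sum>i\<in>?F. \<Sum>c<N. if c < length (T ! i) then 1 else 0)" by (rule sum.swap)
  also have "\<dots> = (\<Sum>i\<in>?F. length (T ! i))"
  proof (rule sum.cong)
    fix i assume "i \<in> ?F"
    then have "{c \<in> {..<N}. c < length (T ! i)} = {..<length (T ! i)}" using assms by auto
    then show "(\<Sum>c<N. if c < length (T ! i) then 1 else 0) = length (T ! i)"
      by (simp add: sum.inter_filter[symmetric])
  qed simp
  finally show ?thesis .
qed

text \<open>Counting column by column: the \<open>k\<close> subsequences cover at most \<open>min k h\<close> entries of a column of
  height \<open>h\<close>, and these numbers add up to the size of the first \<open>k\<close> rows.\<close>
lemma greene_num_reading_word_le:
  assumes t: "is_tableau T" and d: "distinct (concat T)"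
  shows "greene_num k (reading_word T) \<le> (\<Sum>i<k. part (map length T) i)"
proof -
  obtain C where C: "\<forall>l<k. increasing_in (reading_word T) (C l)"
    "card (\<Union>l<k. C l) = greene_num k (reading_word T)"
    using greene_num_attained .
  let ?U = "\<Union>l<k. C l" and ?N = "length (concat T)"
  let ?col = "\<lambda>c. (\<lambda>i. T ! i ! c) ` column_rows T c"
  have rows: "\<forall>i<length T. length (T ! i) \<le> ?N"
    by (auto simp: length_concat intro: member_le_sum_list)
  have "?U \<subseteq> (\<Union>c<?N. ?U \<inter> ?col c)"
  proof
    fix z assume "z \<in> ?U"
    then have "z \<in> set (concat T)" using C(1) increasing_in_set by fastforce
    then obtain row where "row \<in> set T" "z \<in> set row" by auto
    then obtain i c where "i < length T" "c < length (T ! i)" "z = T ! i ! c"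
      by (metis in_set_conv_nth)
    then have "c < ?N" "z \<in> ?col c" using rows by (auto simp: column_rows_def)
    then show "z \<in> (\<Union>c<?N. ?U \<inter> ?col c)" using \<open>z \<in> ?U\<close> by blast
  qed
  then have "card ?U \<le> card (\<Union>c<?N. ?U \<inter> ?col c)"
    by (rule card_mono[rotated]) (auto simp: column_rows_def)
  also have "\<dots> \<le> (\<Sum>c<?N. card (?U \<inter> ?col c))" by (rule card_UN_le) simp
  also have "\<dots> \<le> (\<Sum>c<?N. card {i \<in> column_rows T c. i < k})"
    by (intro sum_mono card_cover_inter_column[OF t d C(1)])
  also have "\<dots> = (\<Sum>i<k. part (map length T) i)"
    unfolding sum_card_column_rows[OF rows] sum_part_map_length ..
  finally show ?thesis using C(2) by simp
qed

theorem greene_num_eq_sum_rsk_shape: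
  assumes "distinct w"
  shows "greene_num k w = (\<Sum>i<k. part (rsk_shape w) i)"
proof -
  have P: "knuth_equiv (reading_word (rsk_P w)) w" "is_tableau (rsk_P w)" "distinct (concat (rsk_P w))"
    using rsk_P_tableau[OF assms] by auto
  have "greene_num k w = greene_num k (reading_word (rsk_P w))"
    using greene_num_knuth_equiv[OF P(1) distinct_reading_word[OF P(3)]] by simp
  also have "\<dots> = (\<Sum>i<k. part (map length (rsk_P w)) i)"
    using greene_num_reading_word_le[OF P(2,3)] greene_num_reading_word_ge[OF P(2,3)] by (rule antisym)
  finally show ?thesis unfolding rsk_shape_def .
qed

section \<open>Paths of adjacent transpositions\<close>

lemma adj_swap_conv_append:
  assumes "Suc p < length w"
  shows "w = take p w @ w ! p # w ! Suc p # drop (Suc (Suc p)) w"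
    and "adj_swap w p = take p w @ w ! Suc p # w ! p # drop (Suc (Suc p)) w"
proof -
  show w: "w = take p w @ w ! p # w ! Suc p # drop (Suc (Suc p)) w"
    using assms by (metis Cons_nth_drop_Suc Suc_lessD append_take_drop_id)
  have "length (take p w) = p" using assms by simp
  then show "adj_swap w p = take p w @ w ! Suc p # w ! p # drop (Suc (Suc p)) w"
    unfolding adj_swap_def by (subst (1) w) (simp add: list_update_append)
qed

lemma greene_num_adj_swap_ascent:
  assumes "distinct w" "Suc p < length w" "w ! p < w ! Suc p"
  shows "greene_num k (adj_swap w p) \<le> greene_num k w \<and> greene_num k w \<le> greene_num k (adj_swap w p) + 1"
  using greene_num_swap_ascent_le[of "take p w" "w ! p" "w ! Suc p" "drop (Suc (Suc p)) w"]
    greene_num_le_swap_Suc[of "take p w" "w ! p" "w ! Suc p" "drop (Suc (Suc p)) w"]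
    adj_swap_conv_append[OF assms(2)] assms(1,3) by metis

lemma greene_num_adj_swap_descent:
  assumes d: "distinct w" and p: "Suc p < length w" and desc: "\<not> w ! p < w ! Suc p"
  shows "greene_num k w \<le> greene_num k (adj_swap w p) \<and> greene_num k (adj_swap w p) \<le> greene_num k w + 1"
proof -
  let ?u = "take p w" and ?v = "drop (Suc (Suc p)) w"
  have "w ! p \<noteq> w ! Suc p" using nth_eq_iff_index_eq[OF d, of p "Suc p"] p by simp
  then have "w ! Suc p < w ! p" using desc by simp
  moreover have "distinct (?u @ w ! Suc p # w ! p # ?v)"
    using d by (subst (asm) adj_swap_conv_append(1)[OF p]) auto
  ultimately show ?thesis
    using greene_num_swap_ascent_le greene_num_le_swap_Suc adj_swap_conv_append[OF p] by metis
qed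

lemma card_less_Suc_filter:
  "card {m. m < Suc t \<and> Q m} = card {m. m < t \<and> Q m} + (if Q t then 1 else 0)"
proof -
  have "{m. m < Suc t \<and> Q m} = (if Q t then insert t {m. m < t \<and> Q m} else {m. m < t \<and> Q m})"
    using less_Suc_eq by auto
  then show ?thesis by simp
qed

lemma greene_num_adj_swap_walk:
  fixes \<sigma> :: "nat \<Rightarrow> nat list" and p :: "nat \<Rightarrow> nat"
  assumes "\<And>m. m \<le> t \<Longrightarrow> distinct (\<sigma> m)"
    and "\<And>m. m < t \<Longrightarrow> Suc (p m) < length (\<sigma> m) \<and> \<sigma> (Suc m) = adj_swap (\<sigma> m) (p m)"
  shows "int (greene_num k (\<sigma> t)) - int (card {m. m < t \<and> \<not> \<sigma> m ! p m < \<sigma> m ! Suc (p m)})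
           \<le> int (greene_num k (\<sigma> 0))
       \<and> int (greene_num k (\<sigma> 0))
           \<le> int (greene_num k (\<sigma> t)) + int (card {m. m < t \<and> \<sigma> m ! p m < \<sigma> m ! Suc (p m)})"
  using assms
proof (induction t)
  case (Suc t)
  note IH = Suc.IH[OF Suc.prems(1)[OF le_SucI] Suc.prems(2)[OF less_SucI]]
  have step: "distinct (\<sigma> t)" "Suc (p t) < length (\<sigma> t)" "\<sigma> (Suc t) = adj_swap (\<sigma> t) (p t)"
    using Suc.prems by auto
  show ?case
  proof (cases "\<sigma> t ! p t < \<sigma> t ! Suc (p t)")
    case True
    then show ?thesis
      using IH greene_num_adj_swap_ascent[OF step(1,2) True, of k] step(3) by (simp add: card_less_Suc_filter)
  next
    case False
    then show ?thesis
      using IH greene_num_adj_swap_descent[OF step(1,2) False, of k] step(3) by (simp add: card_less_Suc_filter)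
  qed
qed simp

theorem lemma2:
  fixes n t r s :: nat and \<sigma> :: "nat \<Rightarrow> nat list" and pos :: "nat \<Rightarrow> nat"
  assumes perms: "\<And>m. m \<le> t \<Longrightarrow> is_perm n (\<sigma> m)"
    and steps: "\<And>m. m < t \<Longrightarrow> Suc (pos m) < n \<and> \<sigma> (Suc m) = adj_swap (\<sigma> m) (pos m)"
    and s_def: "s = card {m. m < t \<and> \<sigma> m ! pos m < \<sigma> m ! Suc (pos m)}"
    and r_def: "r = card {m. m < t \<and> \<not> (\<sigma> m ! pos m < \<sigma> m ! Suc (pos m))}"
    and j: "1 \<le> j" "j \<le> n"
  shows "int (\<Sum>i<j. part (rsk_shape (\<sigma> t)) i) - int r \<le> int (\<Sum>i<j. part (rsk_shape (\<sigma> 0)) i)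
       \<and> int (\<Sum>i<j. part (rsk_shape (\<sigma> 0)) i) \<le> int (\<Sum>i<j. part (rsk_shape (\<sigma> t)) i) + int s"
proof -
  have dist: "distinct (\<sigma> m)" "length (\<sigma> m) = n" if "m \<le> t" for m
    using perms[OF that] unfolding is_perm_def by auto
  have "\<And>m. m < t \<Longrightarrow> Suc (pos m) < length (\<sigma> m) \<and> \<sigma> (Suc m) = adj_swap (\<sigma> m) (pos m)"
    using steps dist by simp
  then have "int (greene_num j (\<sigma> t)) - int r \<le> int (greene_num j (\<sigma> 0))
           \<and> int (greene_num j (\<sigma> 0)) \<le> int (greene_num j (\<sigma> t)) + int s"
    using greene_num_adj_swap_walk[of t \<sigma> pos j] dist s_def r_def by simp
  then show ?thesis using greene_num_eq_sum_rsk_shape dist(1) by simp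
qed

end
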